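(* Let $\Phi$ be a root system of affine type and $c$ a Coxeter element. A root $\alpha\in\Phi_c\setminus\{\delta\}$ is $c$-compatible with $\delta$ (i.e. $(\alpha\|\delta)_c=0$) if and only if $\alpha\in\Upsilon^{\mathrm{re}}_c$.
   Context: $A=[a_{ij}]$ is an $n\times n$ symmetrizable Cartan matrix of affine type with symmetrizing constants $d_i$; $V$ has basis of simple roots $\Pi=\{\alpha_1,\dots,\alpha_n\}$, co-roots $\alpha_i^\vee=d_i^{-1}\alpha_i$, symmetric form $K(\alpha_i^\vee,\alpha_j)=a_{ij}$, reflections $s_i(v)=v-K(\alpha_i^\vee,v)\alpha_i$. $\Phi$ is the root system, $\Phi^+$ the positive roots; $[v:\alpha_i]$, $[v:\alpha_i^\vee]$ coordinates in root and co-root bases; $[x]_+=\max(x,0)$; $\beta^\vee=\frac2{K(\beta,\beta)}\beta$ for real roots, $(-\alpha_i)^\vee=-\alpha_i^\vee$; $\delta$ is the positive imaginary root closest to $0$ and $\delta^\vee$ the positive imaginary root closest to $0$ of the dual root system (Cartan matrix $A^T$). The Coxeter element is indexed $c=s_1\cdots s_n$. With $\alpha_{\mathrm{aff}}$ the affine simple root, $V_{\mathrm{fin}}$ the span of the others, $\Phi_{\mathrm{fin}}=\Phi\cap V_{\mathrm{fin}}$: $\gamma_c\in V_{\mathrm{fin}}$ unique with $c\gamma_c=\gamma_c+\delta$, $U_c=\{v:K(\gamma_c,v)=0\}$, $\Upsilon_c=\Phi\cap U_c$, $\Upsilon^{\mathrm{re}}_c$ the positive real roots in $U_c$ whose $c$-orbit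 contains a root of $\Phi_{\mathrm{fin}}$, $\Phi_c=-\Pi\cup(\Phi^+\setminus U_c)\cup\Upsilon^{\mathrm{re}}_c\cup\{\delta\}$. Real roots of $\Upsilon_c$ form a root system with irreducible components of affine type A; $\Pi_c$ is the unique minimal subset of $\Upsilon_c\cap\Phi^+$ whose nonnegative span contains $\Upsilon_c\cap\Phi^+$. Tube support $\mathrm{Supp}_{\Pi_c}(\beta)$: elements of $\Pi_c$ with nonzero coefficient in the unique expansion of $\beta$ in simple roots of its component; union for sets; component-full: containing all simple roots of some component. $\mathrm{adj}(\alpha,\beta)$ counts elements $\beta_j$ of $\mathrm{Supp}_{\Pi_c}(\beta)$ with $\beta_j\in\mathrm{Supp}_{\Pi_c}(c\alpha)\cup\mathrm{Supp}_{\Pi_c}(c^{-1}\alpha)$ and $\beta_j\notin\mathrm{Supp}_{\Pi_c}(\alpha)$. $(\alpha\|\beta)_c^{\to}=-\sum_{i}[\alpha^\vee:\alpha_i^\vee][\beta:\alpha_i]-\sum_{j<i}a_{ij}[\alpha^\vee:\alpha_i^\vee]_+[\beta:\alpha_j]_+$, $(\alpha\|\beta)_c^{\leftarrow}=-\sum_{i}[\alpha^\vee:\alpha_i^\vee][\beta:\alpha_i]-\sum_{i<j}a_{ij}[\alpha^\vee:\alpha_i^\vee]_+[\beta:\alpha_j]_+$; $(\alpha\|\beta)_c=\mathrm{adj}(\alpha,\beta)$ if $\alpha,\beta\in\Upsilon^{\mathrm{re}}_c$ and $\{\alpha,\beta\}$ is component-full, otherwise the maximum of these two. Distinct roots are $c$-compatible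 when their compatibility degree is $0$. *)

theory Defs
  imports Complex_Main
begin

text \<open>A vector of V is represented by its coordinates in the basis of simple roots,
  as a function nat => real that vanishes outside {1..n}.\<close>

type_synonym vec = "nat \<Rightarrow> real"

definition idx :: "nat \<Rightarrow> nat set" where
  "idx n = {1..n}"

definition in_V :: "nat \<Rightarrow> vec \<Rightarrow> bool" where
  "in_V n v \<longleftrightarrow> (\<forall>j. j \<notin> idx n \<longrightarrow> v j = 0)"

definition cmat :: "(nat \<Rightarrow> nat \<Rightarrow> int) \<Rightarrow> nat \<Rightarrow> nat \<Rightarrow> real" where
  "cmat A i j = real_of_int (A i j)"

definition transp_mat :: "(nat \<Rightarrow> nat \<Rightarrow> int) \<Rightarrow> nat \<Rightarrow> nat \<Rightarrow> int" where
  "transp_mat A i j = A j i"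

definition gen_cartan :: "nat \<Rightarrow> (nat \<Rightarrow> nat \<Rightarrow> int) \<Rightarrow> bool" where
  "gen_cartan n A \<longleftrightarrow>
     (\<forall>i\<in>idx n. A i i = 2) \<and>
     (\<forall>i\<in>idx n. \<forall>j\<in>idx n. i \<noteq> j \<longrightarrow> A i j \<le> 0) \<and>
     (\<forall>i\<in>idx n. \<forall>j\<in>idx n. A i j = 0 \<longleftrightarrow> A j i = 0)"

definition indecomposable :: "nat \<Rightarrow> (nat \<Rightarrow> nat \<Rightarrow> int) \<Rightarrow> bool" where
  "indecomposable n A \<longleftrightarrow>
     \<not> (\<exists>S T. S \<noteq> {} \<and> T \<noteq> {} \<and> S \<inter> T = {} \<and> S \<union> T = idx n \<and>
            (\<forall>i\<in>S. \<forall>j\<in>T. A i j = 0))"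

definition symmetrizing :: "nat \<Rightarrow> (nat \<Rightarrow> nat \<Rightarrow> int) \<Rightarrow> (nat \<Rightarrow> real) \<Rightarrow> bool" where
  "symmetrizing n A d \<longleftrightarrow>
     (\<forall>i\<in>idx n. d i > 0) \<and>
     (\<forall>i\<in>idx n. \<forall>j\<in>idx n. d i * cmat A i j = d j * cmat A j i)"

definition mat_vec :: "nat \<Rightarrow> (nat \<Rightarrow> nat \<Rightarrow> int) \<Rightarrow> vec \<Rightarrow> nat \<Rightarrow> real" where
  "mat_vec n A u i = (\<Sum>j\<in>idx n. cmat A i j * u j)"

text \<open>Affine type (Kac, Thm. 4.3, case (Aff)): indecomposable generalized Cartan matrix
  of corank 1 with a positive null vector u, and A v \<ge> 0 implies A v = 0.\<close>

definition affine_type :: "nat \<Rightarrow> (nat \<Rightarrow> nat \<Rightarrow> int) \<Rightarrow> bool" where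
  "affine_type n A \<longleftrightarrow>
     gen_cartan n A \<and> indecomposable n A \<and>
     (\<exists>u. (\<forall>i\<in>idx n. u i > 0) \<and> (\<forall>i\<in>idx n. mat_vec n A u i = 0) \<and>
          (\<forall>v. (\<forall>i\<in>idx n. mat_vec n A v i = 0) \<longrightarrow> (\<exists>t. \<forall>j\<in>idx n. v j = t * u j))) \<and>
     (\<forall>v. (\<forall>i\<in>idx n. mat_vec n A v i \<ge> 0) \<longrightarrow> (\<forall>i\<in>idx n. mat_vec n A v i = 0))"

definition simple :: "nat \<Rightarrow> vec" where
  "simple i = (\<lambda>j. if j = i then 1 else 0)"

definition Kform :: "nat \<Rightarrow> (nat \<Rightarrow> nat \<Rightarrow> int) \<Rightarrow> (nat \<Rightarrow> real) \<Rightarrow> vec \<Rightarrow> vec \<Rightarrow> real" where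
  "Kform n A d u v = (\<Sum>i\<in>idx n. \<Sum>j\<in>idx n. u i * v j * (d i * cmat A i j))"

definition simple_coroot :: "(nat \<Rightarrow> real) \<Rightarrow> nat \<Rightarrow> vec" where
  "simple_coroot d i = (\<lambda>j. simple i j / d i)"

definition refl :: "nat \<Rightarrow> (nat \<Rightarrow> nat \<Rightarrow> int) \<Rightarrow> (nat \<Rightarrow> real) \<Rightarrow> nat \<Rightarrow> vec \<Rightarrow> vec" where
  "refl n A d i v = (\<lambda>j. v j - Kform n A d (simple_coroot d i) v * simple i j)"

definition word_act :: "nat \<Rightarrow> (nat \<Rightarrow> nat \<Rightarrow> int) \<Rightarrow> (nat \<Rightarrow> real) \<Rightarrow> nat list \<Rightarrow> vec \<Rightarrow> vec" where
  "word_act n A d ws v = foldr (refl n A d) ws v"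

definition real_roots :: "nat \<Rightarrow> (nat \<Rightarrow> nat \<Rightarrow> int) \<Rightarrow> (nat \<Rightarrow> real) \<Rightarrow> vec set" where
  "real_roots n A d = {word_act n A d ws (simple i) | ws i. set ws \<subseteq> idx n \<and> i \<in> idx n}"

text \<open>The null root delta = sum of a_i alpha_i, with (a_i) the positive, relatively prime
  integer null vector of A (Kac's labels); it is the positive imaginary root closest to 0.
  Applied to the transpose of A it gives the coefficients of delta-check in the co-root basis.\<close>

definition null_root :: "nat \<Rightarrow> (nat \<Rightarrow> nat \<Rightarrow> int) \<Rightarrow> vec" where
  "null_root n A = (THE v. in_V n v \<and> (\<forall>i\<in>idx n. mat_vec n A v i = 0) \<and>
       (\<forall>i\<in>idx n. v i \<in> \<int> \<and> v i > 0) \<and>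
       (\<forall>w. in_V n w \<and> (\<forall>i\<in>idx n. mat_vec n A w i = 0) \<and> (\<forall>i\<in>idx n. w i \<in> \<int>)
            \<longrightarrow> (\<exists>k::int. \<forall>i. w i = of_int k * v i)))"

definition roots :: "nat \<Rightarrow> (nat \<Rightarrow> nat \<Rightarrow> int) \<Rightarrow> (nat \<Rightarrow> real) \<Rightarrow> vec set" where
  "roots n A d = real_roots n A d \<union>
     {(\<lambda>j. of_int k * null_root n A j) | k::int. k \<noteq> 0}"

definition pos_roots :: "nat \<Rightarrow> (nat \<Rightarrow> nat \<Rightarrow> int) \<Rightarrow> (nat \<Rightarrow> real) \<Rightarrow> vec set" where
  "pos_roots n A d = {\<beta> \<in> roots n A d. \<forall>i\<in>idx n. \<beta> i \<ge> 0}"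

text \<open>Coordinates [beta-check : alpha_i-check]: for real beta, beta-check = 2/K(beta,beta) beta;
  for delta, delta-check is the null root of the dual system.\<close>

definition coroot_coord :: "nat \<Rightarrow> (nat \<Rightarrow> nat \<Rightarrow> int) \<Rightarrow> (nat \<Rightarrow> real) \<Rightarrow> vec \<Rightarrow> nat \<Rightarrow> real" where
  "coroot_coord n A d \<beta> i =
     (if \<beta> = null_root n A then null_root n (transp_mat A) i
      else d i * (2 / Kform n A d \<beta> \<beta> * \<beta> i))"

definition pospart :: "real \<Rightarrow> real" where
  "pospart x = max x 0"

definition compat_right :: "nat \<Rightarrow> (nat \<Rightarrow> nat \<Rightarrow> int) \<Rightarrow> (nat \<Rightarrow> real) \<Rightarrow> vec \<Rightarrow> vec \<Rightarrow> real" where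
  "compat_right n A d \<alpha> \<beta> =
     - (\<Sum>i\<in>idx n. coroot_coord n A d \<alpha> i * \<beta> i)
     - (\<Sum>i\<in>idx n. \<Sum>j\<in>idx n. if j < i then
          cmat A i j * pospart (coroot_coord n A d \<alpha> i) * pospart (\<beta> j) else 0)"

definition compat_left :: "nat \<Rightarrow> (nat \<Rightarrow> nat \<Rightarrow> int) \<Rightarrow> (nat \<Rightarrow> real) \<Rightarrow> vec \<Rightarrow> vec \<Rightarrow> real" where
  "compat_left n A d \<alpha> \<beta> =
     - (\<Sum>i\<in>idx n. coroot_coord n A d \<alpha> i * \<beta> i)
     - (\<Sum>i\<in>idx n. \<Sum>j\<in>idx n. if i < j then
          cmat A i j * pospart (coroot_coord n A d \<alpha> i) * pospart (\<beta> j) else 0)"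

definition cox :: "nat \<Rightarrow> (nat \<Rightarrow> nat \<Rightarrow> int) \<Rightarrow> (nat \<Rightarrow> real) \<Rightarrow> vec \<Rightarrow> vec" where
  "cox n A d v = word_act n A d [1..<n+1] v"

definition cox_inv :: "nat \<Rightarrow> (nat \<Rightarrow> nat \<Rightarrow> int) \<Rightarrow> (nat \<Rightarrow> real) \<Rightarrow> vec \<Rightarrow> vec" where
  "cox_inv n A d v = word_act n A d (rev [1..<n+1]) v"

definition cox_pow :: "nat \<Rightarrow> (nat \<Rightarrow> nat \<Rightarrow> int) \<Rightarrow> (nat \<Rightarrow> real) \<Rightarrow> int \<Rightarrow> vec \<Rightarrow> vec" where
  "cox_pow n A d k v = (if k \<ge> 0 then (cox n A d ^^ nat k) v else (cox_inv n A d ^^ nat (- k)) v)"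

text \<open>Finite part (aff is the index of the affine simple root), gamma_c, U_c, Upsilon_c.\<close>

definition V_fin :: "nat \<Rightarrow> nat \<Rightarrow> vec set" where
  "V_fin n aff = {v. in_V n v \<and> v aff = 0}"

definition roots_fin :: "nat \<Rightarrow> (nat \<Rightarrow> nat \<Rightarrow> int) \<Rightarrow> (nat \<Rightarrow> real) \<Rightarrow> nat \<Rightarrow> vec set" where
  "roots_fin n A d aff = roots n A d \<inter> V_fin n aff"

definition gamma_c :: "nat \<Rightarrow> (nat \<Rightarrow> nat \<Rightarrow> int) \<Rightarrow> (nat \<Rightarrow> real) \<Rightarrow> nat \<Rightarrow> vec" where
  "gamma_c n A d aff = (THE g. g \<in> V_fin n aff \<and>
       cox n A d g = (\<lambda>j. g j + null_root n A j))"

definition U_c :: "nat \<Rightarrow> (nat \<Rightarrow> nat \<Rightarrow> int) \<Rightarrow> (nat \<Rightarrow> real) \<Rightarrow> nat \<Rightarrow> vec set" where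
  "U_c n A d aff = {v. in_V n v \<and> Kform n A d (gamma_c n A d aff) v = 0}"

definition Upsilon_c :: "nat \<Rightarrow> (nat \<Rightarrow> nat \<Rightarrow> int) \<Rightarrow> (nat \<Rightarrow> real) \<Rightarrow> nat \<Rightarrow> vec set" where
  "Upsilon_c n A d aff = roots n A d \<inter> U_c n A d aff"

definition Upsilon_re :: "nat \<Rightarrow> (nat \<Rightarrow> nat \<Rightarrow> int) \<Rightarrow> (nat \<Rightarrow> real) \<Rightarrow> nat \<Rightarrow> vec set" where
  "Upsilon_re n A d aff = {\<beta> \<in> pos_roots n A d \<inter> real_roots n A d \<inter> U_c n A d aff.
       \<exists>k::int. cox_pow n A d k \<beta> \<in> roots_fin n A d aff}"

definition Phi_c :: "nat \<Rightarrow> (nat \<Rightarrow> nat \<Rightarrow> int) \<Rightarrow> (nat \<Rightarrow> real) \<Rightarrow> nat \<Rightarrow> vec set" where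
  "Phi_c n A d aff =
     {(\<lambda>j. - simple i j) | i. i \<in> idx n} \<union>
     (pos_roots n A d - U_c n A d aff) \<union> Upsilon_re n A d aff \<union> {null_root n A}"

definition nonneg_span :: "vec set \<Rightarrow> vec set" where
  "nonneg_span P = {v. \<exists>F m. finite F \<and> F \<subseteq> P \<and> (\<forall>p\<in>F. m p \<ge> (0::real)) \<and>
                         v = (\<lambda>j. \<Sum>p\<in>F. m p * p j)}"

definition Pi_c :: "nat \<Rightarrow> (nat \<Rightarrow> nat \<Rightarrow> int) \<Rightarrow> (nat \<Rightarrow> real) \<Rightarrow> nat \<Rightarrow> vec set" where
  "Pi_c n A d aff = (THE P.
     P \<subseteq> Upsilon_c n A d aff \<inter> pos_roots n A d \<and>
     Upsilon_c n A d aff \<inter> pos_roots n A d \<subseteq> nonneg_span P \<and>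
     (\<forall>Q. Q \<subset> P \<longrightarrow> \<not> (Upsilon_c n A d aff \<inter> pos_roots n A d \<subseteq> nonneg_span Q)))"

definition tube_components :: "nat \<Rightarrow> (nat \<Rightarrow> nat \<Rightarrow> int) \<Rightarrow> (nat \<Rightarrow> real) \<Rightarrow> nat \<Rightarrow> vec set set" where
  "tube_components n A d aff =
     (let P = Pi_c n A d aff;
          R = (\<lambda>p q. p \<in> P \<and> q \<in> P \<and> Kform n A d p q \<noteq> 0)
      in {C. \<exists>p\<in>P. C = {q \<in> P. R\<^sup>*\<^sup>* p q}})"

definition tube_supp :: "nat \<Rightarrow> (nat \<Rightarrow> nat \<Rightarrow> int) \<Rightarrow> (nat \<Rightarrow> real) \<Rightarrow> nat \<Rightarrow> vec \<Rightarrow> vec set" where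
  "tube_supp n A d aff \<beta> = {g. \<exists>C\<in>tube_components n A d aff. g \<in> C \<and>
       (\<exists>m. \<beta> = (\<lambda>j. \<Sum>p\<in>C. m p * p j) \<and> m g \<noteq> (0::real))}"

definition tube_supp_set :: "nat \<Rightarrow> (nat \<Rightarrow> nat \<Rightarrow> int) \<Rightarrow> (nat \<Rightarrow> real) \<Rightarrow> nat \<Rightarrow> vec set \<Rightarrow> vec set" where
  "tube_supp_set n A d aff S = (\<Union>\<beta>\<in>S. tube_supp n A d aff \<beta>)"

definition component_full :: "nat \<Rightarrow> (nat \<Rightarrow> nat \<Rightarrow> int) \<Rightarrow> (nat \<Rightarrow> real) \<Rightarrow> nat \<Rightarrow> vec set \<Rightarrow> bool" where
  "component_full n A d aff S \<longleftrightarrow>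
     (\<exists>C\<in>tube_components n A d aff. C \<subseteq> tube_supp_set n A d aff S)"

definition adj :: "nat \<Rightarrow> (nat \<Rightarrow> nat \<Rightarrow> int) \<Rightarrow> (nat \<Rightarrow> real) \<Rightarrow> nat \<Rightarrow> vec \<Rightarrow> vec \<Rightarrow> nat" where
  "adj n A d aff \<alpha> \<beta> = card {b \<in> tube_supp n A d aff \<beta>.
       b \<in> tube_supp n A d aff (cox n A d \<alpha>) \<union> tube_supp n A d aff (cox_inv n A d \<alpha>) \<and>
       b \<notin> tube_supp n A d aff \<alpha>}"

definition compat_degree :: "nat \<Rightarrow> (nat \<Rightarrow> nat \<Rightarrow> int) \<Rightarrow> (nat \<Rightarrow> real) \<Rightarrow> nat \<Rightarrow> vec \<Rightarrow> vec \<Rightarrow> real" where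
  "compat_degree n A d aff \<alpha> \<beta> =
     (if \<alpha> \<in> Upsilon_re n A d aff \<and> \<beta> \<in> Upsilon_re n A d aff \<and>
         component_full n A d aff {\<alpha>, \<beta>}
      then real (adj n A d aff \<alpha> \<beta>)
      else max (compat_right n A d \<alpha> \<beta>) (compat_left n A d \<alpha> \<beta>))"

end

theory Submission
  imports Defs "Jordan_Normal_Form.Determinant"
begin

text \<open>
  Write the Cartan matrix as \<open>A = L + U\<close>, where \<open>L\<close> and \<open>U\<close> are its lower and upper triangular
  parts with ones on the diagonal. Since \<open>\<delta>\<close> is imaginary, \<open>(\<alpha>\<parallel>\<delta>)\<^sub>c\<close> is the maximum of the two
  sums, and for \<open>\<alpha>\<close> with nonnegative co-root coordinates \<open>c\<^sub>i = [\<alpha>\<^sup>\<or> : \<alpha>\<^sub>i\<^sup>\<or>]\<close> these are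
  \<open>-\<Sum>\<^sub>i c\<^sub>i (L\<delta>)\<^sub>i\<close> and \<open>-\<Sum>\<^sub>i c\<^sub>i (U\<delta>)\<^sub>i\<close>. As \<open>A\<delta> = 0\<close> they are opposite, so the degree is
  \<open>|\<Sum>\<^sub>i c\<^sub>i (U\<delta>)\<^sub>i|\<close>.

  On the other hand \<open>c = s\<^sub>1 \<cdots> s\<^sub>n\<close> acts triangularly: \<open>c\<gamma> = \<gamma> + \<delta>\<close> holds iff \<open>A\<gamma> = -U\<delta>\<close>, which
  has a unique solution in \<open>V\<^sub>f\<^sub>i\<^sub>n\<close> because \<open>\<Sum>\<^sub>i \<delta>\<^sub>i d\<^sub>i (U\<delta>)\<^sub>i = K(\<delta>,\<delta>)/2 = 0\<close>. Hence
  \<open>K(\<gamma>\<^sub>c, \<alpha>) = -\<Sum>\<^sub>i \<alpha>\<^sub>i d\<^sub>i (U\<delta>)\<^sub>i\<close>, a nonzero multiple of \<open>\<Sum>\<^sub>i c\<^sub>i (U\<delta>)\<^sub>i\<close> for a positive real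
  root \<open>\<alpha>\<close>, which is therefore compatible with \<open>\<delta>\<close> iff it lies in \<open>U\<^sub>c\<close>. Negative simple roots
  \<open>-\<alpha>\<^sub>i\<close> have degree \<open>\<delta>\<^sub>i > 0\<close>, and positive roots outside \<open>U\<^sub>c\<close> are real because multiples of
  \<open>\<delta>\<close> are orthogonal to everything.
\<close>

(* The type synonym vec of the definitions clashes with the vector type of Jordan_Normal_Form. *)
hide_type (open) Matrix.vec

lemma finite_idx [simp]: "finite (idx n)"
  by (simp add: idx_def)

lemma sum_simple_mult: "i \<in> idx n \<Longrightarrow> (\<Sum>j\<in>idx n. simple i j * f j) = f i"
  unfolding simple_def by (simp add: if_distrib[where f = "\<lambda>x. x * _"] cong: if_cong)

lemma Kform_eq_sum_mat_vec: "Kform n A d u v = (\<Sum>i\<in>idx n. u i * d i * mat_vec n A v i)"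
  unfolding Kform_def mat_vec_def by (simp add: sum_distrib_left mult_ac)

lemma Kform_commute:
  assumes "symmetrizing n A d"
  shows "Kform n A d u v = Kform n A d v u"
proof -
  have "Kform n A d u v = (\<Sum>i\<in>idx n. \<Sum>j\<in>idx n. u i * v j * (d j * cmat A j i))"
    unfolding Kform_def using assms unfolding symmetrizing_def by (intro sum.cong refl) metis
  also have "\<dots> = Kform n A d v u"
    unfolding Kform_def by (subst sum.swap) (simp add: mult_ac)
  finally show ?thesis .
qed

lemma mat_vec_diff_scale: "mat_vec n A (\<lambda>j. u j - c * w j) i = mat_vec n A u i - c * mat_vec n A w i"
  unfolding mat_vec_def by (simp add: algebra_simps sum_subtractf sum_distrib_left)

lemma mat_vec_scale: "mat_vec n A (\<lambda>j. c * w j) i = c * mat_vec n A w i"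
  unfolding mat_vec_def by (simp add: algebra_simps sum_distrib_left)

lemma mat_vec_simple: "i \<in> idx n \<Longrightarrow> mat_vec n A (simple i) j = cmat A j i"
  unfolding mat_vec_def by (simp add: mult.commute sum_simple_mult)

lemma Kform_simple_left: "i \<in> idx n \<Longrightarrow> Kform n A d (simple i) v = d i * mat_vec n A v i"
  unfolding Kform_eq_sum_mat_vec by (simp add: mult.assoc sum_simple_mult)

lemma Kform_simple_simple:
  "gen_cartan n A \<Longrightarrow> i \<in> idx n \<Longrightarrow> Kform n A d (simple i) (simple i) = 2 * d i"
  by (simp add: Kform_simple_left mat_vec_simple gen_cartan_def cmat_def)

lemma Kform_diff_scale_left:
  "Kform n A d (\<lambda>j. u j - c * w j) v = Kform n A d u v - c * Kform n A d w v"
  unfolding Kform_eq_sum_mat_vec by (simp add: algebra_simps sum_subtractf sum_distrib_left)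

lemma Kform_diff_scale_right:
  "Kform n A d v (\<lambda>j. u j - c * w j) = Kform n A d v u - c * Kform n A d v w"
  unfolding Kform_eq_sum_mat_vec mat_vec_diff_scale
  by (simp add: algebra_simps sum_subtractf sum_distrib_left)

lemma refl_eq_mat_vec:
  assumes "i \<in> idx n" "d i \<noteq> 0"
  shows "refl n A d i v = (\<lambda>j. v j - mat_vec n A v i * simple i j)"
proof -
  have "Kform n A d (simple_coroot d i) v = mat_vec n A v i"
    unfolding Kform_eq_sum_mat_vec simple_coroot_def
    using assms sum_simple_mult[of i n "\<lambda>j. d j * mat_vec n A v j / d i"] by (simp add: mult.assoc)
  then show ?thesis unfolding refl_def by simp
qed

lemma refl_apply_other: "j \<noteq> i \<Longrightarrow> refl n A d i v j = v j"
  unfolding refl_def simple_def by simp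

lemma in_V_refl: "i \<in> idx n \<Longrightarrow> in_V n v \<Longrightarrow> in_V n (refl n A d i v)"
  unfolding in_V_def refl_def simple_def by auto

lemma Kform_refl_refl:
  assumes sym: "symmetrizing n A d" and cartan: "gen_cartan n A" and i: "i \<in> idx n"
  shows "Kform n A d (refl n A d i u) (refl n A d i v) = Kform n A d u v"
proof -
  have di: "d i \<noteq> 0" using sym i unfolding symmetrizing_def by fastforce
  let ?e = "simple i" and ?a = "mat_vec n A u i" and ?b = "mat_vec n A v i"
  have ue: "Kform n A d u ?e = d i * ?a" and ev: "Kform n A d ?e v = d i * ?b"
    using Kform_commute[OF sym] Kform_simple_left[OF i] by metis+
  show ?thesis
    unfolding refl_eq_mat_vec[of i n d A, OF i di] Kform_diff_scale_left Kform_diff_scale_right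
      Kform_simple_simple[OF cartan i] ue ev
    using Kform_commute[OF sym, of ?e u] ue by (simp add: algebra_simps)
qed

lemma real_root_in_V_Kform_pos:
  assumes sym: "symmetrizing n A d" and cartan: "gen_cartan n A" and \<beta>: "\<beta> \<in> real_roots n A d"
  shows "in_V n \<beta> \<and> Kform n A d \<beta> \<beta> > 0"
proof -
  obtain ws i where \<beta>_eq: "\<beta> = foldr (refl n A d) ws (simple i)"
    and ws: "set ws \<subseteq> idx n" and i: "i \<in> idx n"
    using \<beta> unfolding real_roots_def word_act_def by auto
  have "in_V n (foldr (refl n A d) ws (simple i)) \<and>
        Kform n A d (foldr (refl n A d) ws (simple i)) (foldr (refl n A d) ws (simple i)) = 2 * d i"
    using ws
  proof (induction ws)
    case Nil
    show ?case using i Kform_simple_simple[OF cartan i] by (simp add: in_V_def simple_def)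
  next
    case (Cons a ws)
    then show ?case using in_V_refl Kform_refl_refl[OF sym cartan] by simp
  qed
  moreover have "d i > 0" using sym i unfolding symmetrizing_def by simp
  ultimately show ?thesis unfolding \<beta>_eq by simp
qed

section \<open>Square linear systems\<close>

text \<open>Functions on \<open>idx n = {1..n}\<close> are matched with vectors of Jordan_Normal_Form indexed by
  \<open>{0..<n}\<close>.\<close>

definition mat_of_fun :: "nat \<Rightarrow> (nat \<Rightarrow> nat \<Rightarrow> 'a) \<Rightarrow> 'a mat" where
  "mat_of_fun n M = mat n n (\<lambda>(i, j). M (Suc i) (Suc j))"

definition fun_of_vec :: "nat \<Rightarrow> 'a Matrix.vec \<Rightarrow> nat \<Rightarrow> 'a::zero" where
  "fun_of_vec n x j = (if j \<in> idx n then x $ (j - 1) else 0)"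

lemma sum_idx_eq_sum_lessThan: "sum f (idx n) = (\<Sum>j<n. f (Suc j))"
proof -
  have "idx n = Suc ` {..<n}" unfolding idx_def by (simp add: image_Suc_lessThan)
  then show ?thesis by (simp add: sum.reindex)
qed

lemma mat_of_fun_carrier: "mat_of_fun n M \<in> carrier_mat n n"
  unfolding mat_of_fun_def by simp

lemma fun_of_vec_vec: "j \<in> idx n \<Longrightarrow> fun_of_vec n (vec n (\<lambda>i. f (Suc i))) j = f j"
  by (auto simp: fun_of_vec_def idx_def)

lemma mat_of_fun_mult_vec:
  assumes "x \<in> carrier_vec n" "i \<in> idx n"
  shows "(mat_of_fun n M *\<^sub>v x) $ (i - 1) = (\<Sum>j\<in>idx n. M i j * fun_of_vec n x j)"
proof -
  have "i - 1 < n" "Suc (i - 1) = i" using assms(2) by (auto simp: idx_def)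
  then show ?thesis
    using assms(1) unfolding sum_idx_eq_sum_lessThan fun_of_vec_def mat_of_fun_def
    by (simp add: scalar_prod_def atLeast0LessThan idx_def)
qed

lemma mat_of_fun_mult_vec_eq_0_iff:
  assumes x: "x \<in> carrier_vec n"
  shows "mat_of_fun n M *\<^sub>v x = 0\<^sub>v n \<longleftrightarrow> (\<forall>i\<in>idx n. (\<Sum>j\<in>idx n. M i j * fun_of_vec n x j) = 0)"
proof
  assume Mx: "mat_of_fun n M *\<^sub>v x = 0\<^sub>v n"
  show "\<forall>i\<in>idx n. (\<Sum>j\<in>idx n. M i j * fun_of_vec n x j) = 0"
  proof
    fix i assume i: "i \<in> idx n"
    have "(\<Sum>j\<in>idx n. M i j * fun_of_vec n x j) = (mat_of_fun n M *\<^sub>v x) $ (i - 1)"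
      using mat_of_fun_mult_vec[OF x i] by simp
    also have "\<dots> = 0"
    proof -
      have "i - 1 < n" using i by (auto simp: idx_def)
      then show ?thesis using Mx by simp
    qed
    finally show "(\<Sum>j\<in>idx n. M i j * fun_of_vec n x j) = 0" .
  qed
next
  assume h: "\<forall>i\<in>idx n. (\<Sum>j\<in>idx n. M i j * fun_of_vec n x j) = 0"
  show "mat_of_fun n M *\<^sub>v x = 0\<^sub>v n"
  proof (rule eq_vecI)
    fix i assume "i < dim_vec (0\<^sub>v n :: 'a Matrix.vec)"
    then have "Suc i \<in> idx n" by (simp add: idx_def)
    then show "(mat_of_fun n M *\<^sub>v x) $ i = 0\<^sub>v n $ i"
      using mat_of_fun_mult_vec[OF x] h \<open>i < _\<close> by fastforce
  qed (simp add: mat_of_fun_def)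
qed

lemma fun_of_vec_eq_0_iff:
  assumes "x \<in> carrier_vec n"
  shows "(\<forall>j\<in>idx n. fun_of_vec n x j = 0) \<longleftrightarrow> x = 0\<^sub>v n"
proof
  assume h: "\<forall>j\<in>idx n. fun_of_vec n x j = 0"
  show "x = 0\<^sub>v n"
  proof (rule eq_vecI)
    fix j assume "j < dim_vec (0\<^sub>v n :: 'a Matrix.vec)"
    then have "Suc j \<in> idx n" by (simp add: idx_def)
    then show "x $ j = 0\<^sub>v n $ j" using h \<open>j < _\<close> by (fastforce simp: fun_of_vec_def)
  qed (use assms in simp)
qed (auto simp: fun_of_vec_def idx_def)

lemma square_system_solvable:
  fixes M :: "nat \<Rightarrow> nat \<Rightarrow> 'a::field"
  assumes inj: "\<And>v. \<forall>i\<in>idx n. (\<Sum>j\<in>idx n. M i j * v j) = 0 \<Longrightarrow> \<forall>j\<in>idx n. v j = 0"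
  shows "\<exists>v. (\<forall>j. j \<notin> idx n \<longrightarrow> v j = 0) \<and> (\<forall>i\<in>idx n. (\<Sum>j\<in>idx n. M i j * v j) = b i)"
proof -
  let ?M = "mat_of_fun n M"
  have M: "?M \<in> carrier_mat n n" by (rule mat_of_fun_carrier)
  have "x = 0\<^sub>v n" if x: "x \<in> carrier_vec n" "?M *\<^sub>v x = 0\<^sub>v n" for x
  proof -
    have "\<forall>i\<in>idx n. (\<Sum>j\<in>idx n. M i j * fun_of_vec n x j) = 0"
      using x(2) mat_of_fun_mult_vec_eq_0_iff[OF x(1)] by blast
    then have "\<forall>j\<in>idx n. fun_of_vec n x j = 0" by (rule inj)
    then show ?thesis using fun_of_vec_eq_0_iff[OF x(1)] by blast
  qed
  then have "det ?M \<noteq> 0" using det_0_iff_vec_prod_zero_field[OF M] by blast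
  then obtain B where B: "B \<in> carrier_mat n n" "?M * B = 1\<^sub>m n"
    using det_non_zero_imp_unit[OF M] unfolding Units_def ring_mat_def by auto
  define x where "x = B *\<^sub>v vec n (\<lambda>i. b (Suc i))"
  have x: "x \<in> carrier_vec n" using B unfolding x_def by simp
  have Mx: "?M *\<^sub>v x = vec n (\<lambda>i. b (Suc i))"
    unfolding x_def using B M by (simp add: assoc_mult_mat_vec[symmetric, of _ n n _ n])
  show ?thesis
  proof (intro exI[of _ "fun_of_vec n x"] conjI allI impI ballI)
    show "j \<notin> idx n \<Longrightarrow> fun_of_vec n x j = 0" for j by (simp add: fun_of_vec_def)
    fix i assume i: "i \<in> idx n"
    have "(\<Sum>j\<in>idx n. M i j * fun_of_vec n x j) = (?M *\<^sub>v x) $ (i - 1)"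
      using mat_of_fun_mult_vec[OF x i] by simp
    also have "\<dots> = b i"
    proof -
      have "i - 1 < n" "Suc (i - 1) = i" using i by (auto simp: idx_def)
      then show ?thesis using Mx by simp
    qed
    finally show "(\<Sum>j\<in>idx n. M i j * fun_of_vec n x j) = b i" .
  qed
qed

lemma int_kernel_vector_exists:
  fixes M :: "nat \<Rightarrow> nat \<Rightarrow> int" and u :: "nat \<Rightarrow> real"
  assumes u: "\<forall>i\<in>idx n. (\<Sum>j\<in>idx n. of_int (M i j) * u j) = 0"
    and j0: "j0 \<in> idx n" "u j0 \<noteq> 0"
  shows "\<exists>w. (\<forall>i\<in>idx n. (\<Sum>j\<in>idx n. M i j * w j) = 0) \<and> (\<exists>j\<in>idx n. w j \<noteq> 0)"
proof -
  let ?M = "mat_of_fun n M"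
  let ?MR = "mat_of_fun n (\<lambda>i j. real_of_int (M i j))"
  let ?x = "vec n (\<lambda>i. u (Suc i))"
  have x: "?x \<in> carrier_vec n" by simp
  have "?MR *\<^sub>v ?x = 0\<^sub>v n"
    unfolding mat_of_fun_mult_vec_eq_0_iff[OF x] using u by (simp add: fun_of_vec_vec cong: sum.cong)
  moreover have "?x \<noteq> 0\<^sub>v n" using fun_of_vec_eq_0_iff[OF x] fun_of_vec_vec j0 by metis
  ultimately have "det ?MR = 0" using det_0_iff_vec_prod_zero_field[OF mat_of_fun_carrier] x by blast
  moreover have "?MR = map_mat of_int ?M" unfolding mat_of_fun_def by auto
  ultimately have "det ?M = 0" by simp
  then obtain y where y: "y \<in> carrier_vec n" "y \<noteq> 0\<^sub>v n" "?M *\<^sub>v y = 0\<^sub>v n"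
    using det_0_iff_vec_prod_zero[OF mat_of_fun_carrier] by blast
  then show ?thesis
    using mat_of_fun_mult_vec_eq_0_iff[OF y(1)] fun_of_vec_eq_0_iff[OF y(1)] by blast
qed

section \<open>The null root\<close>

definition positive_integral_null_vector :: "nat \<Rightarrow> (nat \<Rightarrow> nat \<Rightarrow> int) \<Rightarrow> vec \<Rightarrow> bool" where
  "positive_integral_null_vector n A v \<longleftrightarrow>
     in_V n v \<and> (\<forall>i\<in>idx n. mat_vec n A v i = 0) \<and> (\<forall>i\<in>idx n. v i \<in> \<int> \<and> v i > 0)"

definition primitive_null_vector :: "nat \<Rightarrow> (nat \<Rightarrow> nat \<Rightarrow> int) \<Rightarrow> vec \<Rightarrow> bool" where
  "primitive_null_vector n A v \<longleftrightarrow> positive_integral_null_vector n A v \<and>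
     (\<forall>w. in_V n w \<and> (\<forall>i\<in>idx n. mat_vec n A w i = 0) \<and> (\<forall>i\<in>idx n. w i \<in> \<int>)
        \<longrightarrow> (\<exists>k::int. \<forall>i. w i = of_int k * v i))"

lemma null_root_eq_The: "null_root n A = (THE v. primitive_null_vector n A v)"
  unfolding null_root_def primitive_null_vector_def positive_integral_null_vector_def conj_assoc ..

lemma null_vectors_proportional:
  assumes "affine_type n A"
    and v: "\<forall>i\<in>idx n. mat_vec n A v i = 0" "i0 \<in> idx n" "v i0 \<noteq> 0"
    and w: "\<forall>i\<in>idx n. mat_vec n A w i = 0"
  shows "\<exists>\<tau>. \<forall>j\<in>idx n. w j = \<tau> * v j"
proof -
  obtain u where ker: "\<forall>v. (\<forall>i\<in>idx n. mat_vec n A v i = 0) \<longrightarrow> (\<exists>t. \<forall>j\<in>idx n. v j = t * u j)"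
    using assms(1) unfolding affine_type_def by blast
  obtain s t where s: "\<forall>j\<in>idx n. v j = s * u j" and t: "\<forall>j\<in>idx n. w j = t * u j"
    using ker v(1) w by blast
  have "s \<noteq> 0" using s v(2,3) by auto
  show ?thesis
  proof (intro exI ballI)
    fix j assume "j \<in> idx n"
    then have "w j = t * u j" "v j = s * u j" using s t by auto
    then show "w j = t / s * v j" using \<open>s \<noteq> 0\<close> by simp
  qed
qed

lemma positive_integral_null_vector_exists:
  assumes affine: "affine_type n A" and i0: "i0 \<in> idx n"
  shows "\<exists>v. positive_integral_null_vector n A v"
proof -
  obtain u where upos: "\<forall>i\<in>idx n. u i > 0" and unull: "\<forall>i\<in>idx n. mat_vec n A u i = 0"
    using affine unfolding affine_type_def by blast
  have "\<forall>i\<in>idx n. (\<Sum>j\<in>idx n. real_of_int (A i j) * u j) = 0"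
    using unull unfolding mat_vec_def cmat_def .
  moreover have ui0: "u i0 \<noteq> 0" using upos i0 by auto
  ultimately obtain w j1 where wnull: "\<forall>i\<in>idx n. (\<Sum>j\<in>idx n. A i j * w j) = 0"
    and j1: "j1 \<in> idx n" "w j1 \<noteq> 0"
    using int_kernel_vector_exists[of n A u i0] i0 by blast
  define W where "W j = (if j \<in> idx n then real_of_int (w j) else 0)" for j
  have Wnull: "\<forall>i\<in>idx n. mat_vec n A W i = 0"
  proof
    fix i assume "i \<in> idx n"
    have "mat_vec n A W i = of_int (\<Sum>j\<in>idx n. A i j * w j)"
      unfolding mat_vec_def W_def cmat_def by simp
    also have "\<dots> = 0" using wnull \<open>i \<in> idx n\<close> by simp
    finally show "mat_vec n A W i = 0" .
  qed
  obtain \<tau> where \<tau>: "\<forall>j\<in>idx n. W j = \<tau> * u j"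
    using null_vectors_proportional[OF affine unull i0 ui0 Wnull] by blast
  have "\<tau> \<noteq> 0" using \<tau> j1 unfolding W_def by auto
  define s :: int where "s = (if \<tau> > 0 then 1 else -1)"
  have "positive_integral_null_vector n A (\<lambda>j. of_int s * W j)"
    unfolding positive_integral_null_vector_def
  proof (intro conjI ballI)
    show "in_V n (\<lambda>j. of_int s * W j)" unfolding in_V_def W_def by simp
    show "mat_vec n A (\<lambda>j. of_int s * W j) i = 0" if "i \<in> idx n" for i
      using Wnull that by (simp add: mat_vec_scale)
    show "of_int s * W i \<in> \<int>" for i unfolding W_def by simp
    show "of_int s * W i > 0" if "i \<in> idx n" for i
      using \<tau> upos that \<open>\<tau> \<noteq> 0\<close> unfolding s_def by (auto simp: zero_less_mult_iff mult_less_0_iff)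
  qed
  then show ?thesis by blast
qed

lemma positive_integral_null_vector_fractional_part:
  assumes v: "positive_integral_null_vector n A v"
    and w: "in_V n w" "\<forall>i\<in>idx n. mat_vec n A w i = 0" "\<forall>i\<in>idx n. w i \<in> \<int>"
    and w_eq: "\<And>j. w j = \<tau> * v j" and frac: "\<tau> \<notin> \<int>"
  shows "positive_integral_null_vector n A (\<lambda>j. w j - of_int \<lfloor>\<tau>\<rfloor> * v j)"
  unfolding positive_integral_null_vector_def
proof (intro conjI ballI)
  have vnull: "\<forall>i\<in>idx n. mat_vec n A v i = 0" and vpos: "\<forall>i\<in>idx n. v i \<in> \<int> \<and> v i > 0"
    and vV: "in_V n v"
    using v unfolding positive_integral_null_vector_def by auto
  show "in_V n (\<lambda>j. w j - of_int \<lfloor>\<tau>\<rfloor> * v j)" using w(1) vV unfolding in_V_def by simp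
  show "mat_vec n A (\<lambda>j. w j - of_int \<lfloor>\<tau>\<rfloor> * v j) i = 0" if "i \<in> idx n" for i
    using w(2) vnull that by (simp add: mat_vec_diff_scale)
  show "w i - of_int \<lfloor>\<tau>\<rfloor> * v i \<in> \<int>" if "i \<in> idx n" for i using w(3) vpos that by simp
  have "of_int \<lfloor>\<tau>\<rfloor> \<noteq> \<tau>" using frac by (metis Ints_of_int)
  then have "\<tau> - of_int \<lfloor>\<tau>\<rfloor> > 0" by linarith
  then show "w i - of_int \<lfloor>\<tau>\<rfloor> * v i > 0" if "i \<in> idx n" for i
    using vpos that unfolding w_eq by (simp add: left_diff_distrib[symmetric])
qed

lemma primitive_null_vector_exists:
  assumes affine: "affine_type n A" and i0: "i0 \<in> idx n"
  shows "\<exists>v. primitive_null_vector n A v"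
proof -
  let ?P = "positive_integral_null_vector n A"
  have pos_int: "\<exists>k::nat. v i0 = real k \<and> k > 0" if "?P v" for v
  proof -
    have "v i0 \<in> \<int>" "v i0 > 0" using that i0 unfolding positive_integral_null_vector_def by auto
    then obtain k :: int where "v i0 = of_int k" "k > 0" by (auto elim: Ints_cases)
    then show ?thesis by (intro exI[of _ "nat k"]) simp
  qed
  have "\<exists>m::nat. \<exists>v. ?P v \<and> v i0 = real m"
    using positive_integral_null_vector_exists[OF affine i0] pos_int by blast
  from exists_least_iff[THEN iffD1, OF this]
  obtain m v where v: "?P v" "v i0 = real m"
    and least: "\<And>k v'. k < m \<Longrightarrow> ?P v' \<Longrightarrow> v' i0 \<noteq> real k"
    by blast
  have vnull: "\<forall>i\<in>idx n. mat_vec n A v i = 0" and vV: "in_V n v" and vi0: "v i0 > 0"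
    using v(1) i0 unfolding positive_integral_null_vector_def by auto
  have "\<exists>k::int. \<forall>i. w i = of_int k * v i"
    if w: "in_V n w" "\<forall>i\<in>idx n. mat_vec n A w i = 0" "\<forall>i\<in>idx n. w i \<in> \<int>" for w
  proof -
    obtain \<tau> where \<tau>: "\<forall>j\<in>idx n. w j = \<tau> * v j"
      using null_vectors_proportional[OF affine vnull i0 _ w(2)] vi0 by force
    have w_eq: "w j = \<tau> * v j" for j
      using \<tau> w(1) vV unfolding in_V_def by (cases "j \<in> idx n") auto
    have "\<tau> \<in> \<int>"
    proof (rule ccontr)
      assume "\<tau> \<notin> \<int>"
      let ?z = "\<lambda>j. w j - of_int \<lfloor>\<tau>\<rfloor> * v j"
      have z: "?P ?z" using positive_integral_null_vector_fractional_part[OF v(1) w w_eq \<open>\<tau> \<notin> \<int>\<close>] .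
      then obtain k :: nat where k: "?z i0 = real k" using pos_int by blast
      have "\<tau> - of_int \<lfloor>\<tau>\<rfloor> < 1" by linarith
      then have "?z i0 < v i0" using vi0 unfolding w_eq by (simp add: left_diff_distrib[symmetric])
      then have "k < m" using k v(2) by simp
      then show False using least z k by blast
    qed
    then show ?thesis using w_eq by (auto elim: Ints_cases)
  qed
  then show ?thesis using v(1) unfolding primitive_null_vector_def by blast
qed

lemma primitive_null_vector_unique:
  assumes v1: "primitive_null_vector n A v1" and v2: "primitive_null_vector n A v2"
    and i0: "i0 \<in> idx n"
  shows "v1 = v2"
proof -
  have "\<exists>k::int. \<forall>i. v1 i = of_int k * v2 i" "\<exists>k::int. \<forall>i. v2 i = of_int k * v1 i"
    using v1 v2 unfolding primitive_null_vector_def positive_integral_null_vector_def by blast+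
  then obtain k k' :: int where k: "\<forall>i. v1 i = of_int k * v2 i" and k': "\<forall>i. v2 i = of_int k' * v1 i"
    by blast
  have pos: "v1 i0 > 0" "v2 i0 > 0"
    using v1 v2 i0 unfolding primitive_null_vector_def positive_integral_null_vector_def by auto
  have "v1 i0 = of_int (k * k') * v1 i0" using spec[OF k, of i0] spec[OF k', of i0] by simp
  then have "real_of_int (k * k') = 1" using pos by simp
  then have "k * k' = 1" by linarith
  moreover have "k > 0" using spec[OF k, of i0] pos by (simp add: zero_less_mult_iff)
  ultimately have "k = 1" by (simp add: pos_zmult_eq_1_iff)
  then show ?thesis using k by auto
qed

lemma null_root_positive_integral_null_vector:
  assumes affine: "affine_type n A" and i0: "i0 \<in> idx n"
  shows "positive_integral_null_vector n A (null_root n A)"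
proof -
  obtain v where v: "primitive_null_vector n A v"
    using primitive_null_vector_exists[OF affine i0] ..
  have "null_root n A = v"
    unfolding null_root_eq_The using v primitive_null_vector_unique[OF _ v i0] by (rule the_equality)
  then show ?thesis using v unfolding primitive_null_vector_def by simp
qed

section \<open>The Coxeter element is triangular\<close>

definition mat_vec_lower :: "nat \<Rightarrow> (nat \<Rightarrow> nat \<Rightarrow> int) \<Rightarrow> vec \<Rightarrow> nat \<Rightarrow> real" where
  "mat_vec_lower n A v i = v i + (\<Sum>k\<in>idx n. if k < i then cmat A i k * v k else 0)"

definition mat_vec_upper :: "nat \<Rightarrow> (nat \<Rightarrow> nat \<Rightarrow> int) \<Rightarrow> vec \<Rightarrow> nat \<Rightarrow> real" where
  "mat_vec_upper n A v i = v i + (\<Sum>k\<in>idx n. if i < k then cmat A i k * v k else 0)"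

lemma mat_vec_lower_add_upper:
  assumes "gen_cartan n A" and i: "i \<in> idx n"
  shows "mat_vec_lower n A v i + mat_vec_upper n A v i = mat_vec n A v i"
proof -
  have "cmat A i i = 2" using assms unfolding gen_cartan_def cmat_def by simp
  then have "mat_vec n A v i = (\<Sum>k\<in>idx n. (if k < i then cmat A i k * v k else 0)
       + (if i < k then cmat A i k * v k else 0) + (if k = i then 2 * v i else 0))"
    unfolding mat_vec_def by (intro sum.cong refl) auto
  then show ?thesis
    unfolding mat_vec_lower_def mat_vec_upper_def sum.distrib using i by simp
qed

lemma sum_mult_lower_eq_upper:
  assumes "symmetrizing n A d"
  shows "(\<Sum>i\<in>idx n. v i * d i * mat_vec_lower n A v i) = (\<Sum>i\<in>idx n. v i * d i * mat_vec_upper n A v i)"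
proof -
  have "(\<Sum>i\<in>idx n. v i * d i * (\<Sum>k\<in>idx n. if k < i then cmat A i k * v k else 0))
      = (\<Sum>i\<in>idx n. \<Sum>k\<in>idx n. if k < i then v i * v k * (d i * cmat A i k) else 0)"
    by (simp add: sum_distrib_left if_distrib mult_ac cong: if_cong)
  also have "\<dots> = (\<Sum>k\<in>idx n. \<Sum>i\<in>idx n. if k < i then v i * v k * (d k * cmat A k i) else 0)"
    using assms unfolding symmetrizing_def by (subst sum.swap) (intro sum.cong refl, auto)
  also have "\<dots> = (\<Sum>i\<in>idx n. v i * d i * (\<Sum>k\<in>idx n. if i < k then cmat A i k * v k else 0))"
    by (simp add: sum_distrib_left if_distrib mult_ac cong: if_cong)
  finally show ?thesis
    unfolding mat_vec_lower_def mat_vec_upper_def by (simp add: algebra_simps sum.distrib)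
qed

lemma Kform_self_eq_upper:
  assumes "symmetrizing n A d" "gen_cartan n A"
  shows "Kform n A d v v = 2 * (\<Sum>i\<in>idx n. v i * d i * mat_vec_upper n A v i)"
proof -
  have "Kform n A d v v = (\<Sum>i\<in>idx n. v i * d i * (mat_vec_lower n A v i + mat_vec_upper n A v i))"
    unfolding Kform_eq_sum_mat_vec using mat_vec_lower_add_upper[OF assms(2)] by simp
  then show ?thesis
    using sum_mult_lower_eq_upper[OF assms(1)] by (simp add: distrib_left sum.distrib)
qed

lemma mat_vec_upper_eq_imp_eq:
  assumes "\<forall>i\<in>idx n. mat_vec_upper n A w i = mat_vec_upper n A w' i"
  shows "\<forall>i\<in>idx n. w i = w' i"
proof (rule ccontr)
  let ?S = "{i \<in> idx n. w i \<noteq> w' i}"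
  assume "\<not> (\<forall>i\<in>idx n. w i = w' i)"
  then have "?S \<noteq> {}" by blast
  then have "Max ?S \<in> ?S" by (intro Max_in) simp_all
  have above: "k \<le> Max ?S" if "k \<in> ?S" for k using that by simp
  let ?i = "Max ?S"
  have i: "?i \<in> idx n" and ne: "w ?i \<noteq> w' ?i" using \<open>?i \<in> ?S\<close> by auto
  have "(\<Sum>k\<in>idx n. if ?i < k then cmat A ?i k * w k else 0)
      = (\<Sum>k\<in>idx n. if ?i < k then cmat A ?i k * w' k else 0)"
    using above by (intro sum.cong refl) (auto simp: not_le[symmetric])
  then show False using assms i ne unfolding mat_vec_upper_def by auto
qed

lemma foldr_refl_apply_other: "j \<notin> set ws \<Longrightarrow> foldr (refl n A d) ws v j = v j"
  by (induction ws) (auto simp: refl_apply_other)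

lemma cox_apply_outside: "j \<notin> idx n \<Longrightarrow> cox n A d v j = v j"
  unfolding cox_def word_act_def by (rule foldr_refl_apply_other) (auto simp: idx_def)

text \<open>Applying \<open>s\<^sub>1 \<cdots> s\<^sub>n\<close> right to left, the reflection \<open>s\<^sub>i\<close> sees coordinates \<open>k > i\<close>
  already changed and coordinates \<open>k \<le> i\<close> not yet changed.\<close>

lemma mat_vec_upper_cox_diff:
  assumes d: "\<forall>i\<in>idx n. d i \<noteq> 0" and i: "i \<in> idx n"
  shows "mat_vec_upper n A (\<lambda>j. cox n A d v j - v j) i = - mat_vec n A v i"
proof -
  define Q where "Q = foldr (refl n A d) [Suc i..<n+1] v"
  have "[1..<n+1] = [1..<i] @ i # [Suc i..<n+1]"
    using i upt_add_eq_append[of 1 i "n + 1 - i"] upt_conv_Cons[of i "n + 1"] by (simp add: idx_def)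
  then have cox_eq: "cox n A d v = foldr (refl n A d) [1..<i] (refl n A d i Q)"
    unfolding cox_def word_act_def Q_def by simp
  have Q_low: "Q k = v k" if "k \<le> i" for k
    unfolding Q_def using that by (intro foldr_refl_apply_other) auto
  have cox_high: "cox n A d v k = Q k" if "k > i" for k
    unfolding cox_eq using that by (simp add: foldr_refl_apply_other refl_apply_other)
  have "cox n A d v i = refl n A d i Q i"
    unfolding cox_eq by (intro foldr_refl_apply_other) simp
  also have "\<dots> = Q i - mat_vec n A Q i"
    using refl_eq_mat_vec[of i n d A] i d by (simp add: simple_def)
  also have "mat_vec n A Q i = mat_vec n A v i
      + (\<Sum>k\<in>idx n. if i < k then cmat A i k * (cox n A d v k - v k) else 0)"
    unfolding mat_vec_def sum.distrib[symmetric]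
    by (intro sum.cong refl) (auto simp: Q_low cox_high algebra_simps)
  finally show ?thesis
    unfolding mat_vec_upper_def using Q_low[of i] by (simp add: algebra_simps)
qed

lemma cox_eq_add_iff:
  assumes d: "\<forall>i\<in>idx n. d i \<noteq> 0" and g: "in_V n g" and D: "in_V n D"
  shows "cox n A d g = (\<lambda>j. g j + D j) \<longleftrightarrow> (\<forall>i\<in>idx n. mat_vec n A g i = - mat_vec_upper n A D i)"
proof
  assume "cox n A d g = (\<lambda>j. g j + D j)"
  then have "(\<lambda>j. cox n A d g j - g j) = D" by simp
  then show "\<forall>i\<in>idx n. mat_vec n A g i = - mat_vec_upper n A D i"
    using mat_vec_upper_cox_diff[OF d] by fastforce
next
  assume "\<forall>i\<in>idx n. mat_vec n A g i = - mat_vec_upper n A D i"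
  then have "\<forall>i\<in>idx n. mat_vec_upper n A (\<lambda>j. cox n A d g j - g j) i = mat_vec_upper n A D i"
    using mat_vec_upper_cox_diff[OF d] by simp
  then have "\<forall>j\<in>idx n. cox n A d g j - g j = D j" by (rule mat_vec_upper_eq_imp_eq)
  moreover have "cox n A d g j = g j + D j" if "j \<notin> idx n" for j
    using that cox_apply_outside[OF that] D unfolding in_V_def by simp
  ultimately show "cox n A d g = (\<lambda>j. g j + D j)" by force
qed

lemma pospart_eq_self: "x \<ge> 0 \<Longrightarrow> pospart x = x"
  unfolding pospart_def by simp

lemma compat_left_eq_upper:
  assumes "\<forall>i\<in>idx n. coroot_coord n A d \<alpha> i \<ge> 0" and "\<forall>j\<in>idx n. \<beta> j \<ge> 0"
  shows "compat_left n A d \<alpha> \<beta> = - (\<Sum>i\<in>idx n. coroot_coord n A d \<alpha> i * mat_vec_upper n A \<beta> i)"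
proof -
  let ?c = "coroot_coord n A d \<alpha>"
  have "(\<Sum>i\<in>idx n. \<Sum>j\<in>idx n. if i < j then cmat A i j * pospart (?c i) * pospart (\<beta> j) else 0)
      = (\<Sum>i\<in>idx n. ?c i * (\<Sum>j\<in>idx n. if i < j then cmat A i j * \<beta> j else 0))"
    using assms by (simp add: pospart_eq_self sum_distrib_left if_distrib mult_ac cong: if_cong)
  then show ?thesis
    unfolding compat_left_def mat_vec_upper_def by (simp add: distrib_left sum.distrib)
qed

lemma compat_right_eq_lower:
  assumes "\<forall>i\<in>idx n. coroot_coord n A d \<alpha> i \<ge> 0" and "\<forall>j\<in>idx n. \<beta> j \<ge> 0"
  shows "compat_right n A d \<alpha> \<beta> = - (\<Sum>i\<in>idx n. coroot_coord n A d \<alpha> i * mat_vec_lower n A \<beta> i)"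
proof -
  let ?c = "coroot_coord n A d \<alpha>"
  have "(\<Sum>i\<in>idx n. \<Sum>j\<in>idx n. if j < i then cmat A i j * pospart (?c i) * pospart (\<beta> j) else 0)
      = (\<Sum>i\<in>idx n. ?c i * (\<Sum>j\<in>idx n. if j < i then cmat A i j * \<beta> j else 0))"
    using assms by (simp add: pospart_eq_self sum_distrib_left if_distrib mult_ac cong: if_cong)
  then show ?thesis
    unfolding compat_right_def mat_vec_lower_def by (simp add: distrib_left sum.distrib)
qed

context
  fixes n aff :: nat and A :: "nat \<Rightarrow> nat \<Rightarrow> int" and d :: "nat \<Rightarrow> real"
  assumes affine: "affine_type n A" and sym: "symmetrizing n A d" and aff: "aff \<in> idx n"
begin

lemma affine_gen_cartan: "gen_cartan n A"
  using affine unfolding affine_type_def by simp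

lemma d_pos: "i \<in> idx n \<Longrightarrow> d i > 0"
  using sym unfolding symmetrizing_def by simp

lemma null_root_in_V: "in_V n (null_root n A)"
  and mat_vec_null_root: "i \<in> idx n \<Longrightarrow> mat_vec n A (null_root n A) i = 0"
  and null_root_pos: "i \<in> idx n \<Longrightarrow> null_root n A i > 0"
  using null_root_positive_integral_null_vector[OF affine aff]
  unfolding positive_integral_null_vector_def by auto

lemma Kform_null_root_right: "Kform n A d v (null_root n A) = 0"
  unfolding Kform_eq_sum_mat_vec by (simp add: mat_vec_null_root)

lemma Kform_null_root_left: "Kform n A d (null_root n A) v = 0"
  using Kform_commute[OF sym] Kform_null_root_right by metis

lemma null_root_not_real_root: "null_root n A \<notin> real_roots n A d"
  using real_root_in_V_Kform_pos[OF sym affine_gen_cartan] Kform_null_root_right by fastforce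

lemma root_not_in_U_c_real:
  assumes "\<beta> \<in> roots n A d" "\<beta> \<notin> U_c n A d aff"
  shows "\<beta> \<in> real_roots n A d"
proof (rule ccontr)
  assume "\<beta> \<notin> real_roots n A d"
  then obtain k :: int where k: "\<beta> = (\<lambda>j. of_int k * null_root n A j)"
    using assms(1) unfolding roots_def by auto
  have "in_V n \<beta>" using null_root_in_V unfolding k in_V_def by simp
  moreover have "Kform n A d (gamma_c n A d aff) \<beta> = 0"
    unfolding Kform_eq_sum_mat_vec k mat_vec_scale by (simp add: mat_vec_null_root)
  ultimately show False using assms(2) unfolding U_c_def by simp
qed

lemma null_vector_eq_0:
  assumes "\<forall>i\<in>idx n. mat_vec n A v i = 0" and "v aff = 0"
  shows "\<forall>j\<in>idx n. v j = 0"
proof -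
  obtain \<tau> where \<tau>: "\<forall>j\<in>idx n. v j = \<tau> * null_root n A j"
    using null_vectors_proportional[OF affine _ aff _ assms(1)] mat_vec_null_root null_root_pos[OF aff]
    by fastforce
  then have "\<tau> = 0" using assms(2) null_root_pos[OF aff] aff by auto
  then show ?thesis using \<tau> by simp
qed

text \<open>The weights \<open>\<delta>\<^sub>i d\<^sub>i\<close> annihilate the image of \<open>A\<close>, so the coordinate \<open>aff\<close> of a vector
  in the image is determined by the others.\<close>

lemma mat_vec_aff_determined:
  assumes w: "(\<Sum>i\<in>idx n. null_root n A i * d i * w i) = 0"
    and g: "\<forall>i\<in>idx n - {aff}. mat_vec n A g i = w i"
  shows "mat_vec n A g aff = w aff"
proof -
  let ?f = "\<lambda>i. null_root n A i * d i * (mat_vec n A g i - w i)"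
  have "sum ?f (idx n) = Kform n A d (null_root n A) g - (\<Sum>i\<in>idx n. null_root n A i * d i * w i)"
    unfolding Kform_eq_sum_mat_vec by (simp add: algebra_simps sum_subtractf)
  then have "sum ?f (idx n) = 0" using w Kform_null_root_left by simp
  moreover have "sum ?f (idx n) = ?f aff + sum ?f (idx n - {aff})"
    using aff by (simp add: sum.remove)
  moreover have "sum ?f (idx n - {aff}) = 0" using g by simp
  ultimately have "?f aff = 0" by simp
  then show ?thesis using null_root_pos[OF aff] d_pos[OF aff] by simp
qed

lemma mat_vec_surj_on_orthogonal:
  assumes w: "(\<Sum>i\<in>idx n. null_root n A i * d i * w i) = 0"
  shows "\<exists>g\<in>V_fin n aff. \<forall>i\<in>idx n. mat_vec n A g i = w i"
proof -
  \<comment> \<open>\<open>A\<close> with its row \<open>aff\<close> replaced by the unit row, which is invertible\<close>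
  define M where "M i j = (if i = aff then simple aff j else cmat A i j)" for i j
  have M_mult: "(\<Sum>j\<in>idx n. M i j * v j) = (if i = aff then v aff else mat_vec n A v i)" for i v
    unfolding M_def mat_vec_def using sum_simple_mult[OF aff] by simp
  have "\<forall>j\<in>idx n. v j = 0" if "\<forall>i\<in>idx n. (\<Sum>j\<in>idx n. M i j * v j) = 0" for v
  proof -
    have row: "(if i = aff then v aff else mat_vec n A v i) = 0" if "i \<in> idx n" for i
      using that \<open>\<forall>i\<in>idx n. _ = 0\<close> unfolding M_mult by blast
    have "v aff = 0" using row[OF aff] by simp
    have off: "\<forall>i\<in>idx n - {aff}. mat_vec n A v i = 0"
    proof
      fix i assume "i \<in> idx n - {aff}"
      with row[of i] show "mat_vec n A v i = 0" by simp
    qed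
    then have "mat_vec n A v aff = 0" using mat_vec_aff_determined[of "\<lambda>_. 0" v] by simp
    then have "\<forall>i\<in>idx n. mat_vec n A v i = 0" using off by blast
    then show ?thesis using null_vector_eq_0 \<open>v aff = 0\<close> by blast
  qed
  then obtain g where g0: "\<forall>j. j \<notin> idx n \<longrightarrow> g j = 0"
    and g: "\<forall>i\<in>idx n. (\<Sum>j\<in>idx n. M i j * g j) = (if i = aff then 0 else w i)"
    using square_system_solvable[of n M "\<lambda>i. if i = aff then 0 else w i"] by blast
  have row: "(if i = aff then g aff else mat_vec n A g i) = (if i = aff then 0 else w i)"
    if "i \<in> idx n" for i
    using that g unfolding M_mult by blast
  have "g aff = 0" using row[OF aff] by simp
  have off: "\<forall>i\<in>idx n - {aff}. mat_vec n A g i = w i"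
  proof
    fix i assume "i \<in> idx n - {aff}"
    with row[of i] show "mat_vec n A g i = w i" by simp
  qed
  then have "mat_vec n A g aff = w aff" using mat_vec_aff_determined[OF w] by blast
  then have "\<forall>i\<in>idx n. mat_vec n A g i = w i" using off by blast
  moreover have "g \<in> V_fin n aff" using g0 \<open>g aff = 0\<close> unfolding V_fin_def in_V_def by simp
  ultimately show ?thesis by blast
qed

lemma gamma_c_spec:
  "gamma_c n A d aff \<in> V_fin n aff \<and>
   (\<forall>i\<in>idx n. mat_vec n A (gamma_c n A d aff) i = - mat_vec_upper n A (null_root n A) i)"
proof -
  let ?\<delta> = "null_root n A"
  let ?P = "\<lambda>g. g \<in> V_fin n aff \<and> (\<forall>i\<in>idx n. mat_vec n A g i = - mat_vec_upper n A ?\<delta> i)"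
  have "(\<Sum>i\<in>idx n. ?\<delta> i * d i * - mat_vec_upper n A ?\<delta> i) = 0"
    using Kform_self_eq_upper[OF sym affine_gen_cartan, of ?\<delta>] Kform_null_root_right
    by (simp add: sum_negf)
  then obtain g where g: "?P g"
    using mat_vec_surj_on_orthogonal[of "\<lambda>i. - mat_vec_upper n A ?\<delta> i"] by blast
  have unique: "h = g" if h: "?P h" for h
  proof
    fix j
    have "\<forall>j\<in>idx n. h j - 1 * g j = 0"
      using null_vector_eq_0[of "\<lambda>j. h j - 1 * g j"] h g
      unfolding mat_vec_diff_scale V_fin_def by simp
    then show "h j = g j" using h g unfolding V_fin_def in_V_def by (cases "j \<in> idx n") auto
  qed
  have d_ne: "\<forall>i\<in>idx n. d i \<noteq> 0" using d_pos by fastforce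
  have "gamma_c n A d aff = g"
    unfolding gamma_c_def
  proof (rule the_equality)
    show "g \<in> V_fin n aff \<and> cox n A d g = (\<lambda>j. g j + ?\<delta> j)"
      using g cox_eq_add_iff[where A = A, OF d_ne _ null_root_in_V] unfolding V_fin_def by simp
    show "h = g" if h: "h \<in> V_fin n aff \<and> cox n A d h = (\<lambda>j. h j + ?\<delta> j)" for h
    proof (rule unique)
      have "in_V n h" using h unfolding V_fin_def by simp
      then show "?P h" using h cox_eq_add_iff[where A = A, OF d_ne _ null_root_in_V] by simp
    qed
  qed
  then show ?thesis using g by simp
qed

lemma Kform_gamma_c:
  "Kform n A d (gamma_c n A d aff) v = - (\<Sum>i\<in>idx n. v i * d i * mat_vec_upper n A (null_root n A) i)"
proof -
  have "Kform n A d (gamma_c n A d aff) v = Kform n A d v (gamma_c n A d aff)"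
    by (rule Kform_commute[OF sym])
  also have "\<dots> = (\<Sum>i\<in>idx n. v i * d i * mat_vec n A (gamma_c n A d aff) i)"
    by (rule Kform_eq_sum_mat_vec)
  finally show ?thesis using gamma_c_spec by (simp add: sum_negf)
qed

lemma compat_degree_null_root:
  "compat_degree n A d aff \<alpha> (null_root n A) =
     max (compat_right n A d \<alpha> (null_root n A)) (compat_left n A d \<alpha> (null_root n A))"
  unfolding compat_degree_def Upsilon_re_def using null_root_not_real_root by auto

lemma compat_degree_null_root_positive_real:
  assumes \<alpha>: "\<alpha> \<in> real_roots n A d" "\<forall>i\<in>idx n. \<alpha> i \<ge> 0" "\<alpha> \<noteq> null_root n A"
  shows "compat_degree n A d aff \<alpha> (null_root n A) =
           \<bar>2 / Kform n A d \<alpha> \<alpha> * Kform n A d (gamma_c n A d aff) \<alpha>\<bar>"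
proof -
  let ?\<delta> = "null_root n A" and ?c = "coroot_coord n A d \<alpha>"
  define t where "t = (\<Sum>i\<in>idx n. ?c i * mat_vec_upper n A ?\<delta> i)"
  have K: "Kform n A d \<alpha> \<alpha> > 0"
    using real_root_in_V_Kform_pos[OF sym affine_gen_cartan \<alpha>(1)] by simp
  have c: "?c i = d i * (2 / Kform n A d \<alpha> \<alpha> * \<alpha> i)" for i
    unfolding coroot_coord_def using \<alpha>(3) by simp
  have c_nonneg: "\<forall>i\<in>idx n. ?c i \<ge> 0"
    using K \<alpha>(2) d_pos unfolding c by (simp add: less_imp_le)
  have \<delta>_nonneg: "\<forall>j\<in>idx n. ?\<delta> j \<ge> 0"
    using null_root_pos by (simp add: less_imp_le)
  have "mat_vec_lower n A ?\<delta> i = - mat_vec_upper n A ?\<delta> i" if "i \<in> idx n" for i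
    using mat_vec_lower_add_upper[OF affine_gen_cartan that, of ?\<delta>] mat_vec_null_root[OF that]
    by linarith
  then have "compat_right n A d \<alpha> ?\<delta> = t"
    unfolding compat_right_eq_lower[OF c_nonneg \<delta>_nonneg] t_def by (simp add: sum_negf)
  moreover have "compat_left n A d \<alpha> ?\<delta> = - t"
    unfolding compat_left_eq_upper[OF c_nonneg \<delta>_nonneg] t_def ..
  moreover have "t = - (2 / Kform n A d \<alpha> \<alpha> * Kform n A d (gamma_c n A d aff) \<alpha>)"
    unfolding t_def c Kform_gamma_c by (simp add: sum_distrib_left mult_ac)
  ultimately show ?thesis unfolding compat_degree_null_root by (simp add: abs_if max_def)
qed

lemma compat_degree_null_root_eq_0_iff:
  assumes "\<alpha> \<in> real_roots n A d" "\<forall>i\<in>idx n. \<alpha> i \<ge> 0" "\<alpha> \<noteq> null_root n A"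
  shows "compat_degree n A d aff \<alpha> (null_root n A) = 0 \<longleftrightarrow> \<alpha> \<in> U_c n A d aff"
  using compat_degree_null_root_positive_real[OF assms]
    real_root_in_V_Kform_pos[OF sym affine_gen_cartan assms(1)]
  unfolding U_c_def by simp

lemma compat_degree_null_root_neg_simple:
  assumes i: "i \<in> idx n"
  shows "compat_degree n A d aff (\<lambda>j. - simple i j) (null_root n A) = null_root n A i"
proof -
  let ?\<delta> = "null_root n A" and ?\<alpha> = "\<lambda>j. - simple i j"
  have "?\<alpha> \<noteq> ?\<delta>"
  proof
    assume "?\<alpha> = ?\<delta>"
    then have "?\<alpha> i = ?\<delta> i" by (rule fun_cong)
    then show False using null_root_pos[OF i] by (simp add: simple_def)
  qed
  moreover have "Kform n A d ?\<alpha> ?\<alpha> = 2 * d i"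
    using Kform_simple_simple[OF affine_gen_cartan i] unfolding Kform_def by simp
  ultimately have c: "coroot_coord n A d ?\<alpha> k = - simple i k" for k
    unfolding coroot_coord_def using d_pos[OF i] by (simp add: simple_def)
  have pos_c: "pospart (coroot_coord n A d ?\<alpha> k) = 0" for k
    using c[of k] by (simp add: pospart_def simple_def)
  have "(\<Sum>k\<in>idx n. coroot_coord n A d ?\<alpha> k * ?\<delta> k) = - ?\<delta> i"
    unfolding c using sum_simple_mult[OF i, of ?\<delta>] by (simp add: sum_negf)
  then have "compat_right n A d ?\<alpha> ?\<delta> = ?\<delta> i" "compat_left n A d ?\<alpha> ?\<delta> = ?\<delta> i"
    unfolding compat_right_def compat_left_def pos_c by simp_all
  then show ?thesis unfolding compat_degree_null_root by simp
qed

end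

theorem proposition5p6:
  fixes n aff :: nat and A :: "nat \<Rightarrow> nat \<Rightarrow> int" and d :: "nat \<Rightarrow> real" and \<alpha> :: vec
  assumes "affine_type n A"
    and "symmetrizing n A d"
    and "aff \<in> idx n"
    and "null_root n A aff = 1"
    and "\<alpha> \<in> Phi_c n A d aff"
    and "\<alpha> \<noteq> null_root n A"
  shows "compat_degree n A d aff \<alpha> (null_root n A) = 0 \<longleftrightarrow> \<alpha> \<in> Upsilon_re n A d aff"
proof -
  note setting = assms(1-3)
  have Upsilon_re_sub: "Upsilon_re n A d aff \<subseteq> real_roots n A d \<inter> pos_roots n A d \<inter> U_c n A d aff"
    unfolding Upsilon_re_def by auto
  consider (neg_simple) i where "i \<in> idx n" "\<alpha> = (\<lambda>j. - simple i j)"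
    | (positive) "\<alpha> \<in> (pos_roots n A d - U_c n A d aff) \<union> Upsilon_re n A d aff"
    using assms(5,6) unfolding Phi_c_def by blast
  then show ?thesis
  proof cases
    case neg_simple
    then have "\<alpha> \<notin> pos_roots n A d" unfolding pos_roots_def by (auto simp: simple_def)
    then show ?thesis
      using neg_simple Upsilon_re_sub compat_degree_null_root_neg_simple[OF setting]
        null_root_pos[OF setting] by fastforce
  next
    case positive
    then have "\<alpha> \<in> real_roots n A d" "\<forall>i\<in>idx n. \<alpha> i \<ge> 0"
      and "\<alpha> \<in> U_c n A d aff \<longleftrightarrow> \<alpha> \<in> Upsilon_re n A d aff"
      using Upsilon_re_sub root_not_in_U_c_real[OF setting] unfolding pos_roots_def by auto
    then show ?thesis using compat_degree_null_root_eq_0_iff[OF setting _ _ assms(6)] by blast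
  qed
qed

end
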